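(* Let $M\in\mathbb{N}$, $r\in\{1,\dots,M\}$, let $C\in\mathbb{R}^{M\times M}$ have singular values $\lambda_1\ge\dots\ge\lambda_M$, let $E\in\mathbb{R}^{M\times M}$ be any matrix with largest singular value $\sigma_1$, and let $\pi_r\in\mathcal{S}_{M,r}$ maximize $\|\tilde\pi_r C\|_{S_2}$ over $\mathcal{S}_{M,r}$. Define for $\tilde\pi_r\in\mathcal{S}_{M,r}$ $$Z^1_{\tilde\pi_r}:=\|\tilde\pi_r C\|_{S_2}^2-\|\pi_r C\|_{S_2}^2+2\operatorname{tr}\big(E^T(\tilde\pi_r-\pi_r)C\big).$$ Then $\sup_{\tilde\pi_r\in\mathcal{S}_{M,r}}Z^1_{\tilde\pi_r}\le\min(\mathrm{I}',\mathrm{II}',\mathrm{III}')$, where $$\mathrm{I}'=4r_M\lambda_1\sigma_1,$$ $$\mathrm{II}'=4r_M\frac{\lambda_1^2}{\lambda_r^2-\lambda_{r+1}^2}\sigma_1^2\ \text{ if }\lambda_r>\lambda_{r+1},\qquad \mathrm{II}'=\infty\ \text{ if }\lambda_r=\lambda_{r+1},$$ $$\mathrm{III}'=\max\Big(4\sqrt{r_M\Delta_r}\,\frac{\lambda_1}{\lambda_r}\sigma_1,\ 8r_M\frac{\lambda_1^2}{\lambda_r^2}\sigma_1^2\Big)\ \text{ if }\lambda_r>0,\qquad \mathrm{III}'=\infty\ \text{ if }\lambda_r=0.$$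
   Context: $\mathcal{S}_{M,r}$ denotes the set of all orthogonal projections of rank $r$ onto subspaces of $\mathbb{R}^M$. $r_M:=\min(r,M-r)$, $\Delta_r:=\sum_{i=r+1}^{2r}\lambda_i^2$ with the convention $\lambda_i:=0$ for $i>M$. $\|\cdot\|_{S_2}$ is the Hilbert–Schmidt norm. *)

theory Defs
  imports "Jordan_Normal_Form.DL_Rank" "HOL-Library.Extended_Real"
begin

text \<open>Real square matrices of size M are JNF matrices in carrier_mat M M.
  Indices of singular values are 1-based: lam 1 \<ge> lam 2 \<ge> ... \<ge> lam M.\<close>

definition orth_mat :: "nat \<Rightarrow> real mat \<Rightarrow> bool" where
  "orth_mat M U \<longleftrightarrow> U \<in> carrier_mat M M \<and> transpose_mat U * U = 1\<^sub>m M"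

definition has_singular_values :: "nat \<Rightarrow> real mat \<Rightarrow> (nat \<Rightarrow> real) \<Rightarrow> bool" where
  "has_singular_values M C lam \<longleftrightarrow>
     C \<in> carrier_mat M M \<and>
     (\<forall>i\<in>{1..M}. 0 \<le> lam i) \<and>
     (\<forall>i j. 1 \<le> i \<longrightarrow> i \<le> j \<longrightarrow> j \<le> M \<longrightarrow> lam j \<le> lam i) \<and>
     (\<exists>U V. orth_mat M U \<and> orth_mat M V \<and>
        C = U * mat_diag M (\<lambda>i. lam (Suc i)) * transpose_mat V)"

definition proj_set :: "nat \<Rightarrow> nat \<Rightarrow> real mat set" where
  "proj_set M r = {P. P \<in> carrier_mat M M \<and> transpose_mat P = P \<and> P * P = P
                      \<and> vec_space.rank M P = r}"

definition hs_norm :: "real mat \<Rightarrow> real" where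
  "hs_norm A = sqrt (\<Sum>i<dim_row A. \<Sum>j<dim_col A. (A $$ (i,j))\<^sup>2)"

definition mtrace :: "real mat \<Rightarrow> real" where
  "mtrace A = (\<Sum>i<dim_row A. A $$ (i,i))"

end

theory Submission
  imports Defs "HOL-Analysis.Convex"
begin

text \<open>Pass to the singular coordinates of \<open>C = U diag(\<lambda>) V\<^sup>T\<close>: the maximizer \<open>\<pi>\<close> becomes a
  projection \<open>G\<close>, a competitor a projection \<open>P\<close>, and \<open>E\<close> a matrix \<open>F\<close> of operator norm
  \<open>\<sigma>\<^sub>1\<close>. Maximality forces the diagonal of \<open>G\<close> onto the top \<open>r\<close> indices, up to a block of
  indices sharing the value \<open>\<lambda>\<^sub>r\<close>, so \<open>G\<close> commutes with \<open>D = diag(\<lambda>)\<close>. With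
  \<open>X = P(1 - G)D\<close> and \<open>Y = (1 - P)GD\<close> one has \<open>(P - G)D = X - Y\<close> and, by the commutation,
  \<open>\<parallel>PD\<parallel>\<^sup>2 - \<parallel>GD\<parallel>\<^sup>2 = \<parallel>X\<parallel>\<^sup>2 - \<parallel>Y\<parallel>\<^sup>2\<close>. Since \<open>X\<close> lives between projections of ranks \<open>r\<close> and
  \<open>M - r\<close>, and so does \<open>Y\<close>, Cauchy--Schwarz gives \<open>Z \<le> p\<^sup>2 - q\<^sup>2 + 2\<sigma>\<^sub>1\<surd>r\<^sub>M (p + q)\<close> for
  \<open>p = \<parallel>X\<parallel>, q = \<parallel>Y\<parallel>\<close>. Both squared norms are weighted sums of \<open>\<lambda>\<^sub>i\<^sup>2\<close> with the same total
  weight \<open>t = r - tr(PG) \<le> r\<^sub>M\<close>, the weights of \<open>X\<close> avoiding the top block and those of \<open>Y\<close>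
  avoiding the rest; hence \<open>p\<^sup>2 \<le> \<lambda>\<^sub>r\<^sup>2 t \<le> q\<^sup>2 \<le> \<lambda>\<^sub>1\<^sup>2 t\<close>, \<open>p\<^sup>2 \<le> \<lambda>\<^sub>r\<^sub>+\<^sub>1\<^sup>2 t\<close> under a gap, and
  \<open>p\<^sup>2 \<le> \<Delta>\<^sub>r\<close>. The three bounds are three ways of maximizing the excess under these
  constraints.\<close>

section \<open>Trace and Hilbert--Schmidt norm\<close>

lemma transpose_mat_diag [simp]: "transpose_mat (mat_diag n f) = mat_diag n f"
  by (rule eq_matI) (auto simp: mat_diag_def)

lemma mtrace_mult_comm:
  assumes "A \<in> carrier_mat n m" and "B \<in> carrier_mat m n"
  shows "mtrace (A * B) = mtrace (B * A)"
proof -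
  have "mtrace (A * B) = (\<Sum>i<n. \<Sum>k<m. A $$ (i,k) * B $$ (k,i))"
    using assms by (simp add: mtrace_def scalar_prod_def atLeast0LessThan)
  also have "\<dots> = (\<Sum>k<m. \<Sum>i<n. B $$ (k,i) * A $$ (i,k))"
    by (subst sum.swap) (simp add: mult.commute)
  also have "\<dots> = mtrace (B * A)"
    using assms by (simp add: mtrace_def scalar_prod_def atLeast0LessThan)
  finally show ?thesis .
qed

lemma mtrace_diff:
  "A \<in> carrier_mat n n \<Longrightarrow> B \<in> carrier_mat n n \<Longrightarrow> mtrace (A - B) = mtrace A - mtrace B"
  by (simp add: mtrace_def sum_subtractf)

lemma mtrace_one_mat [simp]: "mtrace (1\<^sub>m n) = real n"
  by (simp add: mtrace_def)

lemma mtrace_mult_mat_diag: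
  "A \<in> carrier_mat n n \<Longrightarrow> mtrace (A * mat_diag n f) = (\<Sum>i<n. A $$ (i,i) * f i)"
  by (simp add: mtrace_def mat_diag_mult_right)

definition hs_sq :: "real mat \<Rightarrow> real" where
  "hs_sq A = mtrace (transpose_mat A * A)"

lemma mtrace_transpose_mult_eq_sum:
  assumes "A \<in> carrier_mat n m" and "B \<in> carrier_mat n m"
  shows "mtrace (transpose_mat A * B) = (\<Sum>(j,i)\<in>{..<m}\<times>{..<n}. A $$ (i,j) * B $$ (i,j))"
  using assms by (simp add: mtrace_def scalar_prod_def atLeast0LessThan sum.cartesian_product)

lemma hs_sq_eq_sum:
  "A \<in> carrier_mat n m \<Longrightarrow> hs_sq A = (\<Sum>j<m. \<Sum>i<n. (A $$ (i,j))\<^sup>2)"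
  by (simp add: hs_sq_def mtrace_def scalar_prod_def atLeast0LessThan power2_eq_square)

lemma hs_sq_nonneg: "A \<in> carrier_mat n m \<Longrightarrow> 0 \<le> hs_sq A"
  by (simp add: hs_sq_eq_sum sum_nonneg)

lemma hs_norm_power2: "A \<in> carrier_mat n m \<Longrightarrow> (hs_norm A)\<^sup>2 = hs_sq A"
  by (simp add: hs_norm_def hs_sq_eq_sum sum_nonneg sum.swap[of _ "{..<n}"])

lemma hs_sq_transpose: "A \<in> carrier_mat n m \<Longrightarrow> hs_sq (transpose_mat A) = hs_sq A"
  by (simp add: hs_sq_eq_sum sum.swap[of _ "{..<n}"])

lemma abs_mtrace_transpose_mult_le:
  assumes A: "A \<in> carrier_mat n m" and B: "B \<in> carrier_mat n m"
  shows "\<bar>mtrace (transpose_mat A * B)\<bar> \<le> sqrt (hs_sq A) * sqrt (hs_sq B)"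
proof -
  let ?I = "{..<m}\<times>{..<n}" and ?a = "\<lambda>(j,i). A $$ (i,j)" and ?b = "\<lambda>(j,i). B $$ (i,j)"
  have sq: "hs_sq C = (\<Sum>p\<in>?I. ((\<lambda>(j,i). C $$ (i,j)) p)\<^sup>2)" if "C \<in> carrier_mat n m" for C
    using that by (simp add: hs_sq_def mtrace_transpose_mult_eq_sum case_prod_beta power2_eq_square)
  have "(mtrace (transpose_mat A * B))\<^sup>2 \<le> hs_sq A * hs_sq B"
    using Cauchy_Schwarz_ineq_sum[of ?a ?b ?I] A B
    by (simp add: mtrace_transpose_mult_eq_sum sq case_prod_beta)
  then show ?thesis
    by (metis real_sqrt_abs real_sqrt_le_mono real_sqrt_mult)
qed

text \<open>Fixing the dimension lets the simplifier discharge the carrier side conditions of the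
  matrix ring laws, which it cannot do when the dimensions are schematic.\<close>

locale square_matrices =
  fixes n :: nat
begin

lemma sq_carrier [simp]:
  "A \<in> carrier_mat n n \<Longrightarrow> B \<in> carrier_mat n n \<Longrightarrow> A * B \<in> carrier_mat n n"
  "A \<in> carrier_mat n n \<Longrightarrow> B \<in> carrier_mat n n \<Longrightarrow> A - B \<in> carrier_mat n n"
  "A \<in> carrier_mat n n \<Longrightarrow> B \<in> carrier_mat n n \<Longrightarrow> A + B \<in> carrier_mat n n"
  "A \<in> carrier_mat n n \<Longrightarrow> transpose_mat A \<in> carrier_mat n n"
  for A B :: "real mat"
  by (auto simp: minus_carrier_mat)

lemma sq_mult_assoc:
  "A \<in> carrier_mat n n \<Longrightarrow> B \<in> carrier_mat n n \<Longrightarrow> C \<in> carrier_mat n n \<Longrightarrow>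
    A * B * C = A * (B * C)" for A B C :: "real mat"
  by simp

lemma sq_mult_minus_distrib:
  "A \<in> carrier_mat n n \<Longrightarrow> B \<in> carrier_mat n n \<Longrightarrow> C \<in> carrier_mat n n \<Longrightarrow>
    (A - B) * C = A * C - B * C"
  "A \<in> carrier_mat n n \<Longrightarrow> B \<in> carrier_mat n n \<Longrightarrow> C \<in> carrier_mat n n \<Longrightarrow>
    C * (A - B) = C * A - C * B" for A B C :: "real mat"
  using minus_mult_distrib_mat[of A n n B C n] mult_minus_distrib_mat[of C n n A n B] by auto

lemma sq_transpose_mult:
  "A \<in> carrier_mat n n \<Longrightarrow> B \<in> carrier_mat n n \<Longrightarrow>
    transpose_mat (A * B) = transpose_mat B * transpose_mat A" for A B :: "real mat"
  by (rule transpose_mult)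

lemma sq_transpose_minus:
  "A \<in> carrier_mat n n \<Longrightarrow> B \<in> carrier_mat n n \<Longrightarrow>
    transpose_mat (A - B) = transpose_mat A - transpose_mat B" for A B :: "real mat"
  by (rule transpose_minus) auto

lemma sq_one_mult:
  "A \<in> carrier_mat n n \<Longrightarrow> 1\<^sub>m n * A = A"
  "A \<in> carrier_mat n n \<Longrightarrow> A * 1\<^sub>m n = A" for A :: "real mat"
  by simp_all

lemmas sq_mat_simps = sq_mult_assoc sq_mult_minus_distrib sq_transpose_mult sq_transpose_minus
  sq_one_mult

lemma sq_mtrace_mult_comm:
  "A \<in> carrier_mat n n \<Longrightarrow> B \<in> carrier_mat n n \<Longrightarrow> mtrace (A * B) = mtrace (B * A)"
  by (rule mtrace_mult_comm)

end

section \<open>Orthogonal projections\<close>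

definition orth_proj :: "nat \<Rightarrow> real mat \<Rightarrow> bool" where
  "orth_proj n P \<longleftrightarrow> P \<in> carrier_mat n n \<and> transpose_mat P = P \<and> P * P = P"

lemma orth_proj_carrier: "orth_proj n P \<Longrightarrow> P \<in> carrier_mat n n"
  and orth_proj_transpose: "orth_proj n P \<Longrightarrow> transpose_mat P = P"
  and orth_proj_idem: "orth_proj n P \<Longrightarrow> P * P = P"
  by (simp_all add: orth_proj_def)

lemma orth_proj_sym_entry: "orth_proj n P \<Longrightarrow> i < n \<Longrightarrow> j < n \<Longrightarrow> P $$ (j,i) = P $$ (i,j)"
  unfolding orth_proj_def by (metis carrier_matD index_transpose_mat(1))

lemma orth_proj_diag_eq_row_norm:
  assumes P: "orth_proj n P" and i: "i < n"
  shows "P $$ (i,i) = (\<Sum>k<n. (P $$ (i,k))\<^sup>2)"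
proof -
  have "P $$ (i,i) = (P * P) $$ (i,i)" using P by (simp add: orth_proj_idem)
  also have "\<dots> = (\<Sum>k<n. P $$ (i,k) * P $$ (k,i))"
    using orth_proj_carrier[OF P] i by (simp add: scalar_prod_def atLeast0LessThan)
  also have "\<dots> = (\<Sum>k<n. (P $$ (i,k))\<^sup>2)"
    using P i by (intro sum.cong) (auto simp: power2_eq_square orth_proj_sym_entry)
  finally show ?thesis .
qed

lemma orth_proj_diag_nonneg: "orth_proj n P \<Longrightarrow> i < n \<Longrightarrow> 0 \<le> P $$ (i,i)"
  by (simp add: orth_proj_diag_eq_row_norm sum_nonneg)

lemma orth_proj_diag_le_1:
  assumes P: "orth_proj n P" and i: "i < n"
  shows "P $$ (i,i) \<le> 1"
proof -
  have "(P $$ (i,i))\<^sup>2 \<le> (\<Sum>k<n. (P $$ (i,k))\<^sup>2)"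
    using i by (intro member_le_sum) auto
  then have "P $$ (i,i) * P $$ (i,i) \<le> P $$ (i,i) * 1"
    using orth_proj_diag_eq_row_norm[OF P i] by (simp add: power2_eq_square)
  then show ?thesis
    using orth_proj_diag_nonneg[OF P i] by (cases "P $$ (i,i) = 0") (auto simp: mult_le_cancel_left)
qed

text \<open>A diagonal entry 0 or 1 of a projection isolates its row and column, since the
  squared row norm equals the diagonal entry.\<close>

lemma orth_proj_offdiag_zero:
  assumes P: "orth_proj n P" and j: "j < n" and k: "k < n" "k \<noteq> j"
    and Pjj: "P $$ (j,j) = 0 \<or> P $$ (j,j) = 1"
  shows "P $$ (j,k) = 0" "P $$ (k,j) = 0"
proof -
  have "(\<Sum>l<n. (P $$ (j,l))\<^sup>2) = (P $$ (j,j))\<^sup>2 + (\<Sum>l\<in>{..<n}-{j}. (P $$ (j,l))\<^sup>2)"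
    using j by (simp add: sum.remove)
  then have "(\<Sum>l\<in>{..<n}-{j}. (P $$ (j,l))\<^sup>2) = 0"
    using orth_proj_diag_eq_row_norm[OF P j] Pjj by auto
  then have "\<forall>l\<in>{..<n}-{j}. (P $$ (j,l))\<^sup>2 = 0"
    by (subst sum_nonneg_eq_0_iff[symmetric]) auto
  then show "P $$ (j,k) = 0" using k by auto
  then show "P $$ (k,j) = 0" using orth_proj_sym_entry[OF P j k(1)] by simp
qed

lemma mtrace_orth_proj_nonneg: "orth_proj n P \<Longrightarrow> 0 \<le> mtrace P"
  unfolding mtrace_def by (rule sum_nonneg) (auto simp: orth_proj_def intro: orth_proj_diag_nonneg)

lemma orth_proj_eq_0_if_diag_0:
  assumes P: "orth_proj n P" and diag: "\<forall>i<n. P $$ (i,i) = 0"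
  shows "P = 0\<^sub>m n n"
proof (rule eq_matI)
  fix i j assume "i < dim_row (0\<^sub>m n n :: real mat)" "j < dim_col (0\<^sub>m n n :: real mat)"
  then show "P $$ (i,j) = 0\<^sub>m n n $$ (i,j)"
    using diag orth_proj_offdiag_zero(2)[OF P, of j i] by (cases "i = j") auto
qed (use orth_proj_carrier[OF P] in auto)

text \<open>The orthogonal projection onto the span of the \<open>j\<close>-th column of \<open>P\<close>, whose squared
  norm is \<open>P $$ (j,j)\<close>; subtracting it from \<open>P\<close> lowers rank and trace by one.\<close>

definition column_proj :: "nat \<Rightarrow> real mat \<Rightarrow> nat \<Rightarrow> real mat" where
  "column_proj n P j = mat n n (\<lambda>(i,k). P $$ (i,j) * P $$ (k,j) / P $$ (j,j))"

context square_matrices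
begin

lemma orth_proj_idem_assoc: "orth_proj n P \<Longrightarrow> A \<in> carrier_mat n n \<Longrightarrow> P * (P * A) = P * A"
  unfolding orth_proj_def by (metis sq_mult_assoc)

lemma diag_transpose_mult_self_nonneg:
  "A \<in> carrier_mat n n \<Longrightarrow> i < n \<Longrightarrow> 0 \<le> (transpose_mat A * A) $$ (i,i)"
  for A :: "real mat"
  by (auto simp: scalar_prod_def intro!: sum_nonneg)

lemma orth_proj_complement: "orth_proj n P \<Longrightarrow> orth_proj n (1\<^sub>m n - P)"
  unfolding orth_proj_def
  by (auto simp: sq_mat_simps intro!: eq_matI)

lemma orth_proj_conj:
  assumes P: "orth_proj n P" and U: "U \<in> carrier_mat n n" and UU: "U * transpose_mat U = 1\<^sub>m n"
  shows "orth_proj n (transpose_mat U * P * U)" and "mtrace (transpose_mat U * P * U) = mtrace P"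
proof -
  note [simp] = orth_proj_carrier[OF P] U
  have "transpose_mat U * P * U * (transpose_mat U * P * U) =
      transpose_mat U * (P * ((U * transpose_mat U) * P) * U)"
    by (simp add: sq_mult_assoc)
  then show "orth_proj n (transpose_mat U * P * U)"
    using P UU unfolding orth_proj_def by (simp add: sq_mat_simps)
  have "mtrace (transpose_mat U * (P * U)) = mtrace (P * U * transpose_mat U)"
    by (rule mtrace_mult_comm[of _ n n]) auto
  then show "mtrace (transpose_mat U * P * U) = mtrace P"
    using UU by (simp add: sq_mat_simps)
qed

lemma orth_proj_sandwich_diag_bounds:
  assumes A: "orth_proj n A" and B: "orth_proj n B" and i: "i < n"
  shows "0 \<le> (A * B * A) $$ (i,i)" and "(A * B * A) $$ (i,i) \<le> A $$ (i,i)"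
proof -
  note [simp] = orth_proj_carrier[OF A] orth_proj_carrier[OF B]
  have sandwich: "Q * R * Q = transpose_mat (R * Q) * (R * Q)" if "orth_proj n Q" "orth_proj n R" for Q R
    using that by (simp add: orth_proj_def sq_mat_simps orth_proj_idem_assoc)
  show "0 \<le> (A * B * A) $$ (i,i)"
    unfolding sandwich[OF A B] using i by (intro diag_transpose_mult_self_nonneg) simp_all
  have "0 \<le> (A * (1\<^sub>m n - B) * A) $$ (i,i)"
    unfolding sandwich[OF A orth_proj_complement[OF B]] using i
    by (intro diag_transpose_mult_self_nonneg) simp_all
  moreover have "A * (1\<^sub>m n - B) * A = A - A * B * A"
    using orth_proj_idem[OF A] by (simp add: sq_mat_simps)
  ultimately show "(A * B * A) $$ (i,i) \<le> A $$ (i,i)" using i carrier_matD[OF orth_proj_carrier[OF A]] by simp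
qed

lemma mtrace_orth_proj_sandwich:
  assumes A: "orth_proj n A" and B: "B \<in> carrier_mat n n"
  shows "mtrace (A * B * A) = mtrace (B * A)"
  using sq_mtrace_mult_comm[of A "B * A"] orth_proj_carrier[OF A] B orth_proj_idem[OF A]
  by (simp add: sq_mat_simps)

text \<open>Off-diagonal entries of a projection live only between indices whose diagonal entries
  are strictly between 0 and 1, so a diagonal matrix constant on those indices commutes with it.\<close>

lemma orth_proj_commute_mat_diag:
  assumes G: "orth_proj n G"
    and const: "\<And>i. i < n \<Longrightarrow> 0 < G $$ (i,i) \<Longrightarrow> G $$ (i,i) < 1 \<Longrightarrow> f i = c"
  shows "G * mat_diag n f = mat_diag n f * G"
proof (rule eq_matI)
  fix i j assume "i < dim_row (mat_diag n f * G)" "j < dim_col (mat_diag n f * G)"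
  then have ij: "i < n" "j < n" using orth_proj_carrier[OF G] by (auto simp: mat_diag_def)
  have "G $$ (i,j) * f j = f i * G $$ (i,j)"
  proof (cases "G $$ (i,j) = 0 \<or> i = j")
    case False
    have "0 < G $$ (k,k) \<and> G $$ (k,k) < 1" if "k \<in> {i, j}" for k
      using that False ij orth_proj_offdiag_zero[OF G, of i j] orth_proj_offdiag_zero[OF G, of j i]
        orth_proj_diag_nonneg[OF G, of k] orth_proj_diag_le_1[OF G, of k]
      by (auto simp: less_le)
    then show ?thesis using const ij by (metis insertI1 insertI2 singletonI mult.commute)
  qed auto
  then show "(G * mat_diag n f) $$ (i,j) = (mat_diag n f * G) $$ (i,j)"
    using ij orth_proj_carrier[OF G] by (simp add: mat_diag_mult_left mat_diag_mult_right)
qed (use orth_proj_carrier[OF G] in \<open>auto simp: mat_diag_def\<close>)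

lemma column_proj_carrier [simp]: "column_proj n P j \<in> carrier_mat n n"
  and dim_column_proj [simp]: "dim_row (column_proj n P j) = n" "dim_col (column_proj n P j) = n"
  by (simp_all add: column_proj_def)

lemma column_proj_transpose: "transpose_mat (column_proj n P j) = column_proj n P j"
  by (rule eq_matI) (auto simp: column_proj_def mult.commute)

lemma orth_proj_mult_column_proj:
  assumes P: "orth_proj n P" and j: "j < n"
  shows "P * column_proj n P j = column_proj n P j"
proof (rule eq_matI)
  fix i k assume "i < dim_row (column_proj n P j)" "k < dim_col (column_proj n P j)"
  then have ik: "i < n" "k < n" by (auto simp: column_proj_def)
  have "(\<Sum>l<n. P $$ (i,l) * P $$ (l,j)) = (P * P) $$ (i,j)"
    using orth_proj_carrier[OF P] ik j by (simp add: scalar_prod_def atLeast0LessThan)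
  then have col: "(\<Sum>l<n. P $$ (i,l) * P $$ (l,j)) = P $$ (i,j)"
    by (simp add: orth_proj_idem[OF P])
  have "(P * column_proj n P j) $$ (i,k) =
      (\<Sum>l<n. P $$ (i,l) * P $$ (l,j)) * P $$ (k,j) / P $$ (j,j)"
    using orth_proj_carrier[OF P] ik
    by (simp add: column_proj_def scalar_prod_def atLeast0LessThan sum_distrib_right
        sum_divide_distrib mult.assoc)
  then show "(P * column_proj n P j) $$ (i,k) = column_proj n P j $$ (i,k)"
    using col ik by (simp add: column_proj_def)
qed (use orth_proj_carrier[OF P] in \<open>auto simp: column_proj_def\<close>)

lemma column_proj_mult_orth_proj:
  assumes P: "orth_proj n P" and j: "j < n"
  shows "column_proj n P j * P = column_proj n P j"
proof -
  have "column_proj n P j * P = transpose_mat (P * column_proj n P j)"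
    using orth_proj_carrier[OF P] orth_proj_transpose[OF P]
    by (simp add: sq_transpose_mult column_proj_transpose)
  then show ?thesis
    by (simp add: orth_proj_mult_column_proj[OF P j] column_proj_transpose)
qed

lemma column_proj_idem:
  assumes P: "orth_proj n P" and j: "j < n" and pos: "0 < P $$ (j,j)"
  shows "column_proj n P j * column_proj n P j = column_proj n P j"
proof (rule eq_matI)
  fix i k assume "i < dim_row (column_proj n P j)" "k < dim_col (column_proj n P j)"
  then have ik: "i < n" "k < n" by (auto simp: column_proj_def)
  have "(column_proj n P j * column_proj n P j) $$ (i,k) =
      P $$ (i,j) * P $$ (k,j) / (P $$ (j,j))\<^sup>2 * (\<Sum>l<n. (P $$ (j,l))\<^sup>2)"
    using ik
    by (simp add: column_proj_def scalar_prod_def atLeast0LessThan sum_distrib_left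
        sum_divide_distrib orth_proj_sym_entry[OF P _ j] power2_eq_square field_simps)
  also have "\<dots> = column_proj n P j $$ (i,k)"
    using ik pos unfolding orth_proj_diag_eq_row_norm[OF P j, symmetric]
    by (simp add: column_proj_def power2_eq_square)
  finally show "(column_proj n P j * column_proj n P j) $$ (i,k) = column_proj n P j $$ (i,k)" .
qed auto

lemma mtrace_column_proj:
  assumes P: "orth_proj n P" and j: "j < n" and pos: "0 < P $$ (j,j)"
  shows "mtrace (column_proj n P j) = 1"
proof -
  have "mtrace (column_proj n P j) = (\<Sum>i<n. (P $$ (j,i))\<^sup>2) / P $$ (j,j)"
    by (simp add: mtrace_def column_proj_def sum_divide_distrib orth_proj_sym_entry[OF P _ j]
        power2_eq_square)
  then show ?thesis
    using pos by (simp add: orth_proj_diag_eq_row_norm[OF P j, symmetric])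
qed

lemma rank_column_proj_le_1: "vec_space.rank n (column_proj n P j) \<le> 1"
  by (rule vec_space.rank_le_1_product_entries[of _ n n "\<lambda>i. P $$ (i,j) / P $$ (j,j)"
        "\<lambda>k. P $$ (k,j)"]) (auto simp: column_proj_def)

lemma orth_proj_minus_column_proj:
  assumes P: "orth_proj n P" and j: "j < n" and pos: "0 < P $$ (j,j)"
  shows "orth_proj n (P - column_proj n P j)"
  using orth_proj_carrier[OF P] orth_proj_transpose[OF P] orth_proj_idem[OF P]
    orth_proj_mult_column_proj[OF P j] column_proj_mult_orth_proj[OF P j]
    column_proj_idem[OF P j pos]
  unfolding orth_proj_def
  by (auto simp: sq_mat_simps column_proj_transpose intro!: eq_matI)

lemma orth_proj_rank_le_trace: "orth_proj n P \<Longrightarrow> real (vec_space.rank n P) \<le> mtrace P"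
proof (induction "nat \<lceil>mtrace P\<rceil>" arbitrary: P rule: less_induct)
  case less
  note P = less.prems
  show ?case
  proof (cases "\<forall>i<n. P $$ (i,i) = 0")
    case True
    then have "P = 0\<^sub>m n n" by (rule orth_proj_eq_0_if_diag_0[OF P])
    then show ?thesis
      using vec_space.rank_0I[of n n] by (simp add: mtrace_def)
  next
    case False
    then obtain j where j: "j < n" "P $$ (j,j) \<noteq> 0" by auto
    with orth_proj_diag_nonneg[OF P] have pos: "0 < P $$ (j,j)" by force
    let ?R = "column_proj n P j"
    have PR: "orth_proj n (P - ?R)" by (rule orth_proj_minus_column_proj[OF P j(1) pos])
    have tr: "mtrace (P - ?R) = mtrace P - 1"
      using orth_proj_carrier[OF P] by (simp add: mtrace_diff mtrace_column_proj[OF P j(1) pos])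
    then have "nat \<lceil>mtrace (P - ?R)\<rceil> < nat \<lceil>mtrace P\<rceil>"
      using mtrace_orth_proj_nonneg[OF PR] by linarith
    then have IH: "real (vec_space.rank n (P - ?R)) \<le> mtrace (P - ?R)"
      using less.hyps PR by blast
    have "P = (P - ?R) + ?R" using orth_proj_carrier[OF P] by (intro eq_matI) auto
    then have "vec_space.rank n P \<le> vec_space.rank n (P - ?R) + vec_space.rank n ?R"
      by (metis vec_space.rank_subadditive column_proj_carrier sq_carrier(2)
          orth_proj_carrier[OF P])
    then show ?thesis using IH tr rank_column_proj_le_1[of P j] by linarith
  qed
qed

lemma orth_proj_rank_eq_trace: "orth_proj n P \<Longrightarrow> real (vec_space.rank n P) = mtrace P"
proof -
  assume P: "orth_proj n P"
  note Pc = orth_proj_carrier[OF P]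
  have "1\<^sub>m n = P + (1\<^sub>m n - P)" using Pc by (intro eq_matI) auto
  then have "vec_space.rank n (1\<^sub>m n :: real mat) \<le> vec_space.rank n P + vec_space.rank n (1\<^sub>m n - P)"
    by (metis vec_space.rank_subadditive Pc sq_carrier(2) one_carrier_mat)
  moreover have "vec_space.rank n (1\<^sub>m n :: real mat) = n"
    using vec_space.det_rank_iff[of "1\<^sub>m n :: real mat" n] by simp
  moreover have "real (vec_space.rank n (1\<^sub>m n - P)) \<le> n - mtrace P"
    using orth_proj_rank_le_trace[OF orth_proj_complement[OF P]] Pc by (simp add: mtrace_diff[of "1\<^sub>m n" n P])
  ultimately show ?thesis using orth_proj_rank_le_trace[OF P] by linarith
qed

end

section \<open>Orthogonal matrices and the operator norm\<close>

lemma orth_mat_carrier: "orth_mat n U \<Longrightarrow> U \<in> carrier_mat n n"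
  by (simp add: orth_mat_def)

lemma orth_mat_mult_transpose: "orth_mat n U \<Longrightarrow> U * transpose_mat U = 1\<^sub>m n"
  unfolding orth_mat_def using mat_mult_left_right_inverse[of "transpose_mat U" n U] by auto

lemma orth_mat_transpose: "orth_mat n U \<Longrightarrow> orth_mat n (transpose_mat U)"
  using orth_mat_mult_transpose[of n U] unfolding orth_mat_def by auto

definition op_norm_le :: "nat \<Rightarrow> real mat \<Rightarrow> real \<Rightarrow> bool" where
  "op_norm_le n F s \<longleftrightarrow> F \<in> carrier_mat n n \<and> (\<forall>A \<in> carrier_mat n n. hs_sq (F * A) \<le> s\<^sup>2 * hs_sq A)"

lemma op_norm_leD: "op_norm_le n F s \<Longrightarrow> A \<in> carrier_mat n n \<Longrightarrow> hs_sq (F * A) \<le> s\<^sup>2 * hs_sq A"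
  by (simp add: op_norm_le_def)

context square_matrices
begin

lemma orth_mat_transpose_mult:
  assumes A: "orth_mat n A" and B: "orth_mat n B"
  shows "orth_mat n (transpose_mat A * B)"
proof -
  note [simp] = orth_mat_carrier[OF A] orth_mat_carrier[OF B]
  have "transpose_mat B * (A * transpose_mat A) * B = 1\<^sub>m n"
    using orth_mat_mult_transpose[OF A] B by (simp add: orth_mat_def sq_mat_simps)
  then show ?thesis unfolding orth_mat_def by (simp add: sq_mat_simps)
qed

lemma hs_sq_orth_mult:
  assumes W: "orth_mat n W" and A: "A \<in> carrier_mat n n"
  shows "hs_sq (W * A) = hs_sq A"
  using W A unfolding hs_sq_def orth_mat_def
  by (simp add: sq_mat_simps flip: sq_mult_assoc[of "transpose_mat W"])

lemma hs_sq_mat_diag_mult_le: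
  assumes f: "\<forall>i<n. \<bar>f i\<bar> \<le> s" and A: "A \<in> carrier_mat n n"
  shows "hs_sq (mat_diag n f * A) \<le> s\<^sup>2 * hs_sq A"
proof -
  have "hs_sq (mat_diag n f * A) = (\<Sum>j<n. \<Sum>i<n. (f i)\<^sup>2 * (A $$ (i,j))\<^sup>2)"
    using A by (simp add: hs_sq_eq_sum[of _ n n] mat_diag_mult_left power_mult_distrib)
  also have "\<dots> \<le> (\<Sum>j<n. \<Sum>i<n. s\<^sup>2 * (A $$ (i,j))\<^sup>2)"
    using f by (intro sum_mono mult_right_mono) (auto simp: abs_le_square_iff[symmetric]
        intro: order.trans)
  also have "\<dots> = s\<^sup>2 * hs_sq A"
    using A by (simp add: hs_sq_eq_sum[of _ n n] sum_distrib_left)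
  finally show ?thesis .
qed

lemma op_norm_le_svd:
  assumes W1: "orth_mat n W1" and W2: "orth_mat n W2" and f: "\<forall>i<n. \<bar>f i\<bar> \<le> s"
  shows "op_norm_le n (W1 * mat_diag n f * transpose_mat W2) s"
  unfolding op_norm_le_def
proof (intro conjI ballI)
  note [simp] = orth_mat_carrier[OF W1] orth_mat_carrier[OF W2]
  show "W1 * mat_diag n f * transpose_mat W2 \<in> carrier_mat n n" by simp
  fix A :: "real mat" assume A: "A \<in> carrier_mat n n"
  have "hs_sq (W1 * mat_diag n f * transpose_mat W2 * A) = hs_sq (mat_diag n f * (transpose_mat W2 * A))"
    using hs_sq_orth_mult[OF W1, of "mat_diag n f * (transpose_mat W2 * A)"] A
    by (simp add: sq_mult_assoc)
  also have "\<dots> \<le> s\<^sup>2 * hs_sq (transpose_mat W2 * A)"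
    using A by (intro hs_sq_mat_diag_mult_le[OF f]) simp
  also have "hs_sq (transpose_mat W2 * A) = hs_sq A"
    using hs_sq_orth_mult[OF orth_mat_transpose[OF W2] A] .
  finally show "hs_sq (W1 * mat_diag n f * transpose_mat W2 * A) \<le> s\<^sup>2 * hs_sq A" .
qed

lemma op_norm_le_rotated:
  assumes U: "orth_mat n U" and V: "orth_mat n V" and U2: "orth_mat n U2" and V2: "orth_mat n V2"
    and E: "E = U2 * mat_diag n f * transpose_mat V2" and f: "\<forall>i<n. \<bar>f i\<bar> \<le> s"
  shows "op_norm_le n (transpose_mat U * E * V) s"
    and "op_norm_le n (transpose_mat (transpose_mat U * E * V)) s"
proof -
  note [simp] = orth_mat_carrier[OF U] orth_mat_carrier[OF V] orth_mat_carrier[OF U2]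
    orth_mat_carrier[OF V2]
  have "transpose_mat U * E * V =
      (transpose_mat U * U2) * mat_diag n f * transpose_mat (transpose_mat V * V2)"
    unfolding E by (simp add: sq_mat_simps)
  then show "op_norm_le n (transpose_mat U * E * V) s"
    using op_norm_le_svd[OF orth_mat_transpose_mult[OF U U2] orth_mat_transpose_mult[OF V V2] f]
    by simp
  have "transpose_mat (transpose_mat U * E * V) =
      (transpose_mat V * V2) * mat_diag n f * transpose_mat (transpose_mat U * U2)"
    unfolding E by (simp add: sq_mat_simps)
  then show "op_norm_le n (transpose_mat (transpose_mat U * E * V)) s"
    using op_norm_le_svd[OF orth_mat_transpose_mult[OF V V2] orth_mat_transpose_mult[OF U U2] f]
    by simp
qed

lemma hs_sq_orth_proj: "orth_proj n Q \<Longrightarrow> hs_sq Q = mtrace Q"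
  unfolding orth_proj_def hs_sq_def by simp

text \<open>Cauchy--Schwarz, with the projection \<open>Q\<close> absorbed into \<open>F\<close>: the factor \<open>\<surd>(tr Q)\<close>
  is the Hilbert--Schmidt norm of \<open>Q\<close>.\<close>

lemma abs_mtrace_le_left_proj:
  assumes Q: "orth_proj n Q" and X: "X \<in> carrier_mat n n" and QX: "Q * X = X"
    and F: "op_norm_le n (transpose_mat F) s" and s: "0 \<le> s"
  shows "\<bar>mtrace (transpose_mat F * X)\<bar> \<le> s * sqrt (mtrace Q) * sqrt (hs_sq X)"
proof -
  have Fc: "F \<in> carrier_mat n n"
    using F unfolding op_norm_le_def by (metis carrier_matD carrier_matI index_transpose_mat(2,3))
  note [simp] = orth_proj_carrier[OF Q] Fc
  have "transpose_mat F * X = transpose_mat (Q * F) * X"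
    using QX orth_proj_transpose[OF Q] X by (simp add: sq_mat_simps)
  then have "\<bar>mtrace (transpose_mat F * X)\<bar> \<le> sqrt (hs_sq (Q * F)) * sqrt (hs_sq X)"
    using abs_mtrace_transpose_mult_le[of "Q * F" n n X] X by simp
  also have "hs_sq (Q * F) = hs_sq (transpose_mat F * Q)"
    using hs_sq_transpose[of "Q * F" n n] orth_proj_transpose[OF Q] by (simp add: sq_mat_simps)
  also have "\<dots> \<le> s\<^sup>2 * mtrace Q"
    using op_norm_leD[OF F, of Q] hs_sq_orth_proj[OF Q] by simp
  finally show ?thesis
    using s hs_sq_nonneg[OF X] by (simp add: real_sqrt_mult mult_right_mono)
qed

lemma abs_mtrace_le_right_proj:
  assumes Q: "orth_proj n Q" and X: "X \<in> carrier_mat n n" and XQ: "X * Q = X"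
    and F: "op_norm_le n F s" and s: "0 \<le> s"
  shows "\<bar>mtrace (transpose_mat F * X)\<bar> \<le> s * sqrt (mtrace Q) * sqrt (hs_sq X)"
proof -
  have Fc [simp]: "F \<in> carrier_mat n n" using F by (simp add: op_norm_le_def)
  note [simp] = orth_proj_carrier[OF Q]
  have "mtrace (transpose_mat F * X) = mtrace (Q * (transpose_mat F * X))"
    using XQ X mtrace_mult_comm[of "transpose_mat F * X" n n Q] by (simp add: sq_mult_assoc)
  also have "\<dots> = mtrace (transpose_mat (F * Q) * X)"
    using X orth_proj_transpose[OF Q] by (simp add: sq_mat_simps)
  finally have "\<bar>mtrace (transpose_mat F * X)\<bar> \<le> sqrt (hs_sq (F * Q)) * sqrt (hs_sq X)"
    using abs_mtrace_transpose_mult_le[of "F * Q" n n X] X by simp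
  also have "hs_sq (F * Q) \<le> s\<^sup>2 * mtrace Q"
    using op_norm_leD[OF F, of Q] hs_sq_orth_proj[OF Q] by simp
  finally show ?thesis
    using s hs_sq_nonneg[OF X] by (simp add: real_sqrt_mult mult_right_mono)
qed

lemma hs_norm_orth_proj_mult_svd:
  assumes P: "orth_proj n P" and U: "orth_mat n U" and V: "orth_mat n V"
    and C: "C = U * mat_diag n f * transpose_mat V"
  shows "(hs_norm (P * C))\<^sup>2 = (\<Sum>i<n. (transpose_mat U * P * U) $$ (i,i) * (f i)\<^sup>2)"
proof -
  note [simp] = orth_mat_carrier[OF U] orth_mat_carrier[OF V] orth_proj_carrier[OF P]
  let ?D = "mat_diag n f"
  have "(hs_norm (P * C))\<^sup>2 = hs_sq (P * C)"
    by (rule hs_norm_power2[of _ n n]) (simp add: C)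
  also have "\<dots> = mtrace (V * (?D * (transpose_mat U * (P * (U * (?D * transpose_mat V))))))"
    unfolding hs_sq_def C
    using orth_proj_transpose[OF P] by (simp add: sq_mat_simps orth_proj_idem_assoc[OF P])
  also have "\<dots> = mtrace (?D * (transpose_mat U * (P * (U * (?D * (transpose_mat V * V))))))"
    by (simp add: sq_mtrace_mult_comm[of V] sq_mult_assoc)
  also have "\<dots> = mtrace (transpose_mat U * P * U * (?D * ?D))"
    using V by (simp add: sq_mtrace_mult_comm[of ?D] sq_mult_assoc sq_one_mult orth_mat_def)
  also have "\<dots> = (\<Sum>i<n. (transpose_mat U * P * U) $$ (i,i) * (f i)\<^sup>2)"
    by (simp add: mtrace_mult_mat_diag power2_eq_square)
  finally show ?thesis .
qed

lemma mtrace_perturbation_rotate: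
  assumes U: "orth_mat n U" and V: "orth_mat n V" and C: "C = U * mat_diag n f * transpose_mat V"
    and P: "P \<in> carrier_mat n n" and Q: "Q \<in> carrier_mat n n" and E: "E \<in> carrier_mat n n"
  shows "mtrace (transpose_mat E * (P - Q) * C) =
    mtrace (transpose_mat (transpose_mat U * E * V)
      * (transpose_mat U * P * U - transpose_mat U * Q * U) * mat_diag n f)"
proof -
  note [simp] = orth_mat_carrier[OF U] orth_mat_carrier[OF V] P Q E
  let ?D = "mat_diag n f"
  have "mtrace (transpose_mat (transpose_mat U * E * V)
      * (transpose_mat U * P * U - transpose_mat U * Q * U) * ?D)
    = mtrace (transpose_mat V * (transpose_mat E * ((U * transpose_mat U) * ((P - Q) * (U * ?D)))))"
    by (simp add: sq_mat_simps)
  also have "\<dots> = mtrace (transpose_mat E * ((P - Q) * (U * ?D)) * transpose_mat V)"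
    using orth_mat_mult_transpose[OF U]
    by (simp add: sq_mtrace_mult_comm[of "transpose_mat V"] sq_one_mult)
  also have "\<dots> = mtrace (transpose_mat E * (P - Q) * C)"
    unfolding C by (simp add: sq_mult_assoc)
  finally show ?thesis by simp
qed

end

section \<open>Scalar inequalities\<close>

lemma sum_lessThan_split: "r \<le> n \<Longrightarrow> (\<Sum>i<n. f i) = (\<Sum>i<r. f i) + (\<Sum>i\<in>{r..<n}. f i)"
  for f :: "nat \<Rightarrow> real"
  by (metis atLeast0LessThan le0 sum.atLeastLessThan_concat)

lemma sum_weighted_le_on_support:
  fixes w a :: "'a \<Rightarrow> real"
  assumes "\<And>i. i \<in> A \<Longrightarrow> 0 \<le> w i" and "\<And>i. i \<in> A \<Longrightarrow> 0 < w i \<Longrightarrow> a i \<le> c"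
  shows "(\<Sum>i\<in>A. w i * a i) \<le> c * (\<Sum>i\<in>A. w i)"
  unfolding sum_distrib_left
  using assms by (intro sum_mono) (metis less_eq_real_def mult.commute mult_eq_0_iff mult_left_mono)

lemma sum_weighted_ge_on_support:
  fixes w a :: "'a \<Rightarrow> real"
  assumes "\<And>i. i \<in> A \<Longrightarrow> 0 \<le> w i" and "\<And>i. i \<in> A \<Longrightarrow> 0 < w i \<Longrightarrow> c \<le> a i"
  shows "c * (\<Sum>i\<in>A. w i) \<le> (\<Sum>i\<in>A. w i * a i)"
  unfolding sum_distrib_left
  using assms by (intro sum_mono) (metis less_eq_real_def mult.commute mult_eq_0_iff mult_left_mono)

text \<open>Weights \<open>g \<in> [0,1]\<close> of total mass \<open>r\<close> can beat the sum of the \<open>r\<close> largest values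
  of \<open>d\<close> only by sitting on those values: the slack of each weight is measured against the
  threshold \<open>d (r - 1)\<close>, and all slacks are nonnegative and sum to at most zero.\<close>

lemma maximal_weights_threshold:
  fixes d g :: "nat \<Rightarrow> real"
  assumes r_le: "r \<le> n" and d_antimono: "\<And>i j. i \<le> j \<Longrightarrow> d j \<le> d i"
    and g: "\<And>i. i < n \<Longrightarrow> 0 \<le> g i \<and> g i \<le> 1" and g_sum: "(\<Sum>i<n. g i) = r"
    and top: "(\<Sum>i<r. d i) \<le> (\<Sum>i<n. g i * d i)"
    and i: "i < n"
  shows "g i < 1 \<Longrightarrow> d i \<le> d (r - 1)" and "0 < g i \<Longrightarrow> d (r - 1) \<le> d i"
proof -
  let ?c = "d (r - 1)"
  define slack where "slack i = (if i < r then (1 - g i) * (d i - ?c) else g i * (?c - d i))" for i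
  have slack_nonneg: "0 \<le> slack i" if "i < n" for i
    using g[OF that] d_antimono[of i "r - 1"] d_antimono[of "r - 1" i]
    by (cases "i < r") (auto simp: slack_def)
  have "(\<Sum>i<n. slack i) = (\<Sum>i<r. d i) - (\<Sum>i<n. g i * d i)"
  proof -
    have "(\<Sum>i<r. slack i) = (\<Sum>i<r. d i) - (\<Sum>i<r. g i * d i) - ?c * (r - (\<Sum>i<r. g i))"
      by (simp add: slack_def algebra_simps sum_subtractf sum.distrib sum_distrib_left
          sum_distrib_right)
    moreover have "(\<Sum>i\<in>{r..<n}. slack i) = ?c * (\<Sum>i\<in>{r..<n}. g i) - (\<Sum>i\<in>{r..<n}. g i * d i)"
      by (simp add: slack_def algebra_simps sum_subtractf sum_distrib_left sum_distrib_right)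
    moreover have "(\<Sum>i\<in>{r..<n}. g i) = r - (\<Sum>i<r. g i)"
      using sum_lessThan_split[OF r_le, of g] g_sum by simp
    moreover have "(\<Sum>i\<in>{r..<n}. g i * d i) = (\<Sum>i<n. g i * d i) - (\<Sum>i<r. g i * d i)"
      using sum_lessThan_split[OF r_le, of "\<lambda>i. g i * d i"] by simp
    ultimately show ?thesis
      using sum_lessThan_split[OF r_le, of slack] by (simp add: algebra_simps)
  qed
  with top have "(\<Sum>i<n. slack i) = 0"
    using sum_nonneg[of "{..<n}" slack] slack_nonneg by force
  then have "slack i = 0"
    using i slack_nonneg sum_nonneg_eq_0_iff[of "{..<n}" slack] by auto
  then show "g i < 1 \<Longrightarrow> d i \<le> d (r - 1)" and "0 < g i \<Longrightarrow> d (r - 1) \<le> d i"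
    using d_antimono[of i "r - 1"] d_antimono[of "r - 1" i]
    by (auto simp: slack_def split: if_splits)
qed

lemma sum_pos_part_tail:
  fixes d :: "nat \<Rightarrow> real"
  assumes d_antimono: "\<And>i j. i \<le> j \<Longrightarrow> d j \<le> d i" and d_nonneg: "\<And>i. 0 \<le> d i"
    and d_vanish: "\<And>i. n \<le> i \<Longrightarrow> d i = 0"
  shows "(\<Sum>i\<in>{r..<n}. max (d i - d (2 * r - 1)) 0) = (\<Sum>i\<in>{r..<2*r}. d i) - d (2 * r - 1) * r"
proof -
  let ?\<theta> = "d (2 * r - 1)"
  have vanish: "max (d i - ?\<theta>) 0 = 0" if "2 * r \<le> i \<or> n \<le> i" for i
    using that d_antimono[of "2 * r - 1" i] d_vanish[of i] d_nonneg[of "2 * r - 1"] by auto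
  have "(\<Sum>i\<in>{r..<n}. max (d i - ?\<theta>) 0) = (\<Sum>i\<in>{r..<max n (2*r)}. max (d i - ?\<theta>) 0)"
    using vanish by (intro sum.mono_neutral_left) (auto simp: not_less)
  also have "\<dots> = (\<Sum>i\<in>{r..<2*r}. max (d i - ?\<theta>) 0)"
    using vanish by (intro sum.mono_neutral_right) auto
  also have "\<dots> = (\<Sum>i\<in>{r..<2*r}. d i - ?\<theta>)"
    using d_antimono[of _ "2 * r - 1"] by (intro sum.cong) auto
  finally show ?thesis by (simp add: sum_subtractf)
qed

lemma top_term_le:
  fixes c d g h \<theta> :: real
  assumes "\<theta> \<le> c" "c \<le> d" "0 \<le> h \<and> h \<le> 1 - g" "g < 1 \<Longrightarrow> d \<le> c"
  shows "(d - \<theta>) * h \<le> (c - \<theta>) * (1 - g)"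
proof (cases "h = 0")
  case False
  with assms have "d = c" by auto
  with assms show ?thesis by (simp add: mult_left_mono)
qed (use assms in auto)

lemma lower_term_le:
  fixes c d g h \<theta> :: real
  assumes "\<theta> \<le> c" "d \<le> c" "0 \<le> h \<and> h \<le> 1 - g" "0 \<le> g" "0 < g \<Longrightarrow> c \<le> d"
  shows "(d - \<theta>) * h \<le> max (d - \<theta>) 0 - (c - \<theta>) * g"
proof (cases "g = 0")
  case True
  with assms mult_left_mono[of h 1 "d - \<theta>"] show ?thesis
    by (cases "\<theta> \<le> d") (auto simp: mult_nonpos_nonneg)
next
  case False
  with assms have "d = c" by auto
  moreover have "(c - \<theta>) * (g + h) \<le> (c - \<theta>) * 1"
    using assms by (intro mult_left_mono) auto
  ultimately show ?thesis using assms by (simp add: algebra_simps)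
qed

text \<open>Each term is compared with \<open>\<theta> + q i\<close>, \<open>\<theta> = d (2r - 1)\<close>, where
  the \<open>q i\<close> telescope to the excess of \<open>d\<close> over \<open>\<theta>\<close> on \<open>[r, 2r)\<close>.\<close>

lemma weighted_sum_le_next_block:
  fixes d g h :: "nat \<Rightarrow> real"
  assumes r_le: "r \<le> n"
    and d_antimono: "\<And>i j. i \<le> j \<Longrightarrow> d j \<le> d i" and d_nonneg: "\<And>i. 0 \<le> d i"
    and d_vanish: "\<And>i. n \<le> i \<Longrightarrow> d i = 0"
    and g: "\<And>i. i < n \<Longrightarrow> 0 \<le> g i \<and> g i \<le> 1" and g_sum: "(\<Sum>i<n. g i) = r"
    and h: "\<And>i. i < n \<Longrightarrow> 0 \<le> h i \<and> h i \<le> 1 - g i" and h_sum: "(\<Sum>i<n. h i) \<le> r"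
    and below: "\<And>i. i < n \<Longrightarrow> g i < 1 \<Longrightarrow> d i \<le> d (r - 1)"
    and above: "\<And>i. i < n \<Longrightarrow> 0 < g i \<Longrightarrow> d (r - 1) \<le> d i"
  shows "(\<Sum>i<n. d i * h i) \<le> (\<Sum>i\<in>{r..<2*r}. d i)"
proof -
  define \<theta> where "\<theta> = d (2 * r - 1)"
  define c where "c = d (r - 1)"
  have \<theta>_nonneg: "0 \<le> \<theta>" using d_nonneg \<theta>_def by auto
  have \<theta>_le_c: "\<theta> \<le> c" unfolding \<theta>_def c_def using d_antimono by auto
  define q where
    "q i = (if i < r then (c - \<theta>) * (1 - g i) else max (d i - \<theta>) 0 - (c - \<theta>) * g i)" for i
  have term_le: "(d i - \<theta>) * h i \<le> q i" if i: "i < n" for i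
  proof (cases "i < r")
    case True
    then have "c \<le> d i" using d_antimono[of i "r - 1"] unfolding c_def by simp
    from top_term_le[OF \<theta>_le_c this h[OF i] below[OF i, folded c_def]] show ?thesis
      using True unfolding q_def by simp
  next
    case False
    then have "d i \<le> c" using d_antimono[of "r - 1" i] unfolding c_def by simp
    from lower_term_le[OF \<theta>_le_c this h[OF i] _ above[OF i, folded c_def]] show ?thesis
      using False g[OF i] unfolding q_def by simp
  qed
  have sum_q: "(\<Sum>i<n. q i) = (\<Sum>i\<in>{r..<n}. max (d i - \<theta>) 0)"
  proof -
    have "(\<Sum>i<r. q i) = (c - \<theta>) * (r - (\<Sum>i<r. g i))"
      by (simp add: q_def sum_distrib_left[symmetric] sum_subtractf)
    moreover have "(\<Sum>i\<in>{r..<n}. q i) =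
        (\<Sum>i\<in>{r..<n}. max (d i - \<theta>) 0) - (c - \<theta>) * (\<Sum>i\<in>{r..<n}. g i)"
      by (simp add: q_def sum_distrib_left sum_subtractf)
    moreover have "(\<Sum>i\<in>{r..<n}. g i) = r - (\<Sum>i<r. g i)"
      using sum_lessThan_split[OF r_le, of g] g_sum by simp
    ultimately show ?thesis using sum_lessThan_split[OF r_le, of q] by simp
  qed
  note sum_q
  also have "(\<Sum>i\<in>{r..<n}. max (d i - \<theta>) 0) = (\<Sum>i\<in>{r..<2*r}. d i) - \<theta> * r"
    unfolding \<theta>_def by (rule sum_pos_part_tail[OF d_antimono d_nonneg d_vanish])
  finally have "(\<Sum>i<n. q i) = (\<Sum>i\<in>{r..<2*r}. d i) - \<theta> * r" .
  moreover have "(\<Sum>i<n. d i * h i) = (\<Sum>i<n. (d i - \<theta>) * h i) + \<theta> * (\<Sum>i<n. h i)"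
    by (simp add: algebra_simps sum.distrib sum_distrib_left sum_subtractf)
  moreover have "(\<Sum>i<n. (d i - \<theta>) * h i) \<le> (\<Sum>i<n. q i)"
    using term_le by (intro sum_mono) auto
  moreover have "\<theta> * (\<Sum>i<n. h i) \<le> \<theta> * r"
    using \<theta>_nonneg h_sum by (simp add: mult_left_mono)
  ultimately show ?thesis by linarith
qed

lemma excess_le_linear:
  fixes p q s l :: real
  assumes "0 \<le> p" "p \<le> q" "0 \<le> s" "q \<le> l"
  shows "p\<^sup>2 - q\<^sup>2 + s * (p + q) \<le> 2 * s * l"
proof -
  have "p\<^sup>2 \<le> q\<^sup>2" using assms by (simp add: power_mono)
  moreover have "s * (p + q) \<le> s * (2 * l)" using assms by (intro mult_left_mono) auto
  ultimately show ?thesis by simp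
qed

lemma concave_quadratic_le:
  fixes x b g :: real
  assumes "0 < g"
  shows "- g * x\<^sup>2 + 2 * b * x \<le> b\<^sup>2 / g"
proof -
  have "0 \<le> (g * x - b)\<^sup>2" by simp
  then have "g * (- g * x\<^sup>2 + 2 * b * x) \<le> b\<^sup>2"
    by (simp add: power2_eq_square algebra_simps)
  then show ?thesis using assms by (simp add: pos_le_divide_eq mult.commute)
qed

lemma excess_le_max:
  fixes p q s D :: real
  assumes "0 \<le> p" "p \<le> q" "0 \<le> s" "p\<^sup>2 \<le> D"
  shows "p\<^sup>2 - q\<^sup>2 + s * (p + q) \<le> max (2 * s * sqrt D) (s\<^sup>2)"
proof (cases "s \<le> 2 * p")
  case True
  have "0 \<le> (q - p) * (q + p - s)" using assms True by (intro mult_nonneg_nonneg) auto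
  then have "p\<^sup>2 - q\<^sup>2 + s * (p + q) \<le> 2 * s * p" by (simp add: power2_eq_square algebra_simps)
  also have "\<dots> \<le> 2 * s * sqrt D"
    using assms real_le_rsqrt by (simp add: mult_left_mono)
  finally show ?thesis by simp
next
  case False
  have "0 \<le> (q - s/2)\<^sup>2" by simp
  moreover have "p\<^sup>2 \<le> (s/2)\<^sup>2" using False assms by (intro power_mono) auto
  moreover have "s * p \<le> s * (s/2)" using False assms by (intro mult_left_mono) auto
  ultimately have "p\<^sup>2 - q\<^sup>2 + s * (p + q) \<le> s\<^sup>2" by (simp add: power2_eq_square algebra_simps)
  then show ?thesis by simp
qed

lemma max_tail_bound_mono:
  fixes a b m D \<sigma> :: real
  assumes "0 < b" "b \<le> a" "0 \<le> m" "0 \<le> D" "0 \<le> \<sigma>"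
  shows "max (4 * sqrt (m * D) * \<sigma>) (4 * m * \<sigma>\<^sup>2)
    \<le> max (4 * sqrt (m * D) * (a / b) * \<sigma>) (8 * m * a\<^sup>2 / b\<^sup>2 * \<sigma>\<^sup>2)"
proof (rule max.mono)
  have "1 \<le> a / b" using assms by simp
  then show "4 * sqrt (m * D) * \<sigma> \<le> 4 * sqrt (m * D) * (a / b) * \<sigma>"
    using assms mult_left_mono[of 1 "a / b" "4 * sqrt (m * D) * \<sigma>"] by (simp add: mult_ac)
  have "1 \<le> a\<^sup>2 / b\<^sup>2" using assms by (simp add: power_mono)
  then have "1 \<le> 2 * (a\<^sup>2 / b\<^sup>2)" by linarith
  then have "4 * m * \<sigma>\<^sup>2 * 1 \<le> 4 * m * \<sigma>\<^sup>2 * (2 * (a\<^sup>2 / b\<^sup>2))"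
    using assms by (intro mult_left_mono) auto
  also have "\<dots> = 8 * m * a\<^sup>2 / b\<^sup>2 * \<sigma>\<^sup>2" by simp
  finally show "4 * m * \<sigma>\<^sup>2 \<le> 8 * m * a\<^sup>2 / b\<^sup>2 * \<sigma>\<^sup>2" by simp
qed

section \<open>The comparison in singular coordinates\<close>

text \<open>The comparison of a maximizer \<open>G\<close> and a competitor \<open>P\<close> after rotating to the singular
  bases of \<open>C\<close>, in which \<open>C\<close> becomes the diagonal matrix \<open>Dlam\<close> and the perturbation \<open>E\<close>
  becomes \<open>F\<close>. Indices are 0-based: \<open>lf i\<close> is the \<open>(i+1)\<close>-st singular value.\<close>

locale proj_comparison = square_matrices +
  fixes r :: nat and G P F :: "real mat" and lf :: "nat \<Rightarrow> real" and s :: real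
  assumes r_le_n: "r \<le> n"
    and G: "orth_proj n G" and P: "orth_proj n P"
    and mtrace_G: "mtrace G = r" and mtrace_P: "mtrace P = r"
    and lf_nonneg: "\<And>i. 0 \<le> lf i" and lf_antimono: "\<And>i j. i \<le> j \<Longrightarrow> lf j \<le> lf i"
    and lf_vanish: "\<And>i. n \<le> i \<Longrightarrow> lf i = 0"
    and s_nonneg: "0 \<le> s" and F: "op_norm_le n F s"
    and F_transpose: "op_norm_le n (transpose_mat F) s"
    and G_maximal: "(\<Sum>i<r. (lf i)\<^sup>2) \<le> (\<Sum>i<n. G $$ (i,i) * (lf i)\<^sup>2)"
begin

definition Dlam :: "real mat" where "Dlam = mat_diag n lf"
definition Gperp :: "real mat" where "Gperp = 1\<^sub>m n - G"
definition Pperp :: "real mat" where "Pperp = 1\<^sub>m n - P"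
definition X :: "real mat" where "X = P * Gperp * Dlam"
definition Y :: "real mat" where "Y = Pperp * G * Dlam"
definition t :: real where "t = r - mtrace (P * G)"

definition Lam :: "real mat" where "Lam = Dlam * Dlam"

definition h :: "nat \<Rightarrow> real" where "h i = (Gperp * P * Gperp) $$ (i,i)"
definition e :: "nat \<Rightarrow> real" where "e i = (G * Pperp * G) $$ (i,i)"

definition Z :: real where
  "Z = (\<Sum>i<n. (P $$ (i,i) - G $$ (i,i)) * (lf i)\<^sup>2) + 2 * mtrace (transpose_mat F * (P - G) * Dlam)"

abbreviation rM :: nat where "rM \<equiv> min r (n - r)"

lemma carriers [simp]:
  "G \<in> carrier_mat n n" "P \<in> carrier_mat n n" "F \<in> carrier_mat n n" "Dlam \<in> carrier_mat n n"
  "Gperp \<in> carrier_mat n n" "Pperp \<in> carrier_mat n n" "X \<in> carrier_mat n n" "Y \<in> carrier_mat n n"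
  using G P F orth_proj_carrier
  by (auto simp: op_norm_le_def Dlam_def Gperp_def Pperp_def X_def Y_def)

lemma Lam_carrier [simp]: "Lam \<in> carrier_mat n n"
  by (simp add: Lam_def)

lemma dims [simp]:
  "dim_row G = n" "dim_col G = n" "dim_row P = n" "dim_col P = n" "dim_row Gperp = n"
  using carrier_matD[OF carriers(1)] carrier_matD[OF carriers(2)] carrier_matD[OF carriers(5)]
  by simp_all

lemmas X_carrier = carriers(7) and Y_carrier = carriers(8)

lemma Gperp: "orth_proj n Gperp" and Pperp: "orth_proj n Pperp"
  unfolding Gperp_def Pperp_def by (simp_all add: orth_proj_complement G P)

lemma transposes [simp]:
  "transpose_mat G = G" "transpose_mat P = P" "transpose_mat Gperp = Gperp"
  "transpose_mat Pperp = Pperp" "transpose_mat Dlam = Dlam"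
  using G P Gperp Pperp by (simp_all add: orth_proj_transpose Dlam_def)

lemma lf_sq_antimono: "i \<le> j \<Longrightarrow> (lf j)\<^sup>2 \<le> (lf i)\<^sup>2"
  by (simp add: power_mono lf_antimono lf_nonneg)

lemma G_diag_bounds: "i < n \<Longrightarrow> 0 \<le> G $$ (i,i) \<and> G $$ (i,i) \<le> 1"
  using orth_proj_diag_nonneg[OF G] orth_proj_diag_le_1[OF G] by auto

lemma G_diag_sum: "(\<Sum>i<n. G $$ (i,i)) = r"
  using mtrace_G by (simp add: mtrace_def)

lemma G_diag_below:
  "i < n \<Longrightarrow> G $$ (i,i) < 1 \<Longrightarrow> (lf i)\<^sup>2 \<le> (lf (r - 1))\<^sup>2"
  and G_diag_above:
  "i < n \<Longrightarrow> 0 < G $$ (i,i) \<Longrightarrow> (lf (r - 1))\<^sup>2 \<le> (lf i)\<^sup>2"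
  using maximal_weights_threshold[OF r_le_n lf_sq_antimono G_diag_bounds G_diag_sum G_maximal]
  by blast+

lemma G_Dlam_commute: "G * Dlam = Dlam * G"
  unfolding Dlam_def
proof (rule orth_proj_commute_mat_diag[OF G])
  fix i assume "i < n" "0 < G $$ (i,i)" "G $$ (i,i) < 1"
  then have "(lf i)\<^sup>2 = (lf (r - 1))\<^sup>2"
    using G_diag_below G_diag_above by (meson order.antisym)
  then show "lf i = lf (r - 1)" by (simp add: lf_nonneg power2_eq_iff_nonneg)
qed

lemma Gperp_Dlam_commute: "Gperp * Dlam = Dlam * Gperp"
  unfolding Gperp_def by (simp add: sq_mat_simps G_Dlam_commute)

lemma mtrace_mult_Lam: "A \<in> carrier_mat n n \<Longrightarrow> mtrace (A * Lam) = (\<Sum>i<n. A $$ (i,i) * (lf i)\<^sup>2)"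
  by (simp add: Lam_def Dlam_def mtrace_mult_mat_diag power2_eq_square)

lemma G_Lam_commute: "G * Lam = Lam * G"
  unfolding Lam_def by (simp flip: sq_mult_assoc add: G_Dlam_commute) (simp add: sq_mult_assoc G_Dlam_commute)

lemma hs_sq_X_eq: "hs_sq X = mtrace (Gperp * P * Gperp * Lam)"
proof -
  have "hs_sq X = mtrace (Dlam * (Gperp * P * Gperp * Dlam))"
    unfolding hs_sq_def X_def by (simp add: sq_mat_simps orth_proj_idem_assoc[OF P])
  also have "\<dots> = mtrace (Gperp * P * Gperp * Dlam * Dlam)"
    by (simp add: sq_mtrace_mult_comm[of Dlam])
  finally show ?thesis by (simp add: Lam_def sq_mult_assoc)
qed

lemma hs_sq_Y_eq: "hs_sq Y = mtrace (G * Pperp * G * Lam)"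
proof -
  have "hs_sq Y = mtrace (Dlam * (G * Pperp * G * Dlam))"
    unfolding hs_sq_def Y_def by (simp add: sq_mat_simps orth_proj_idem_assoc[OF Pperp])
  also have "\<dots> = mtrace (G * Pperp * G * Dlam * Dlam)"
    by (simp add: sq_mtrace_mult_comm[of Dlam])
  finally show ?thesis by (simp add: Lam_def sq_mult_assoc)
qed

text \<open>This is the one place where the commutation of \<open>G\<close> with \<open>Dlam\<close> enters: it lets the
  cross terms \<open>tr (P G \<Lambda>)\<close>, \<open>tr (G P \<Lambda>)\<close> and \<open>tr (G P G \<Lambda>)\<close> coincide.\<close>

lemma diag_weight_diff: "(\<Sum>i<n. (P $$ (i,i) - G $$ (i,i)) * (lf i)\<^sup>2) = hs_sq X - hs_sq Y"
proof -
  have cross1: "mtrace (P * (G * Lam)) = mtrace (G * (P * Lam))"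
    using sq_mtrace_mult_comm[of "P * Lam" G] by (simp add: sq_mult_assoc G_Lam_commute)
  have cross2: "mtrace (G * (P * (G * Lam))) = mtrace (G * (P * Lam))"
    using sq_mtrace_mult_comm[of "G * P * Lam" G] orth_proj_idem_assoc[OF G, of "P * Lam"]
    by (simp add: sq_mult_assoc G_Lam_commute)
  have "hs_sq X = mtrace (P * Lam) - mtrace (P * (G * Lam)) - mtrace (G * (P * Lam))
      + mtrace (G * (P * (G * Lam)))"
    unfolding hs_sq_X_eq Gperp_def by (simp add: sq_mat_simps mtrace_diff[of _ n])
  moreover have "hs_sq Y = mtrace (G * Lam) - mtrace (G * (P * (G * Lam)))"
    unfolding hs_sq_Y_eq Pperp_def
    by (simp add: sq_mat_simps mtrace_diff[of _ n] orth_proj_idem_assoc[OF G])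
  moreover have "(\<Sum>i<n. (P $$ (i,i) - G $$ (i,i)) * (lf i)\<^sup>2) = mtrace (P * Lam) - mtrace (G * Lam)"
    by (simp add: mtrace_mult_Lam left_diff_distrib sum_subtractf)
  ultimately show ?thesis using cross1 cross2 by simp
qed

lemma Z_split: "Z = hs_sq X - hs_sq Y + 2 * (mtrace (transpose_mat F * X) - mtrace (transpose_mat F * Y))"
proof -
  have "P - G = P * Gperp - Pperp * G"
    unfolding Gperp_def Pperp_def by (auto simp: sq_mat_simps intro!: eq_matI)
  then have "transpose_mat F * (P - G) * Dlam = transpose_mat F * X - transpose_mat F * Y"
    unfolding X_def Y_def by (simp add: sq_mat_simps)
  then show ?thesis
    unfolding Z_def diag_weight_diff by (simp add: mtrace_diff[of _ n])
qed

lemma hs_sq_X_eq_sum: "hs_sq X = (\<Sum>i<n. h i * (lf i)\<^sup>2)"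
  unfolding hs_sq_X_eq h_def by (simp add: mtrace_mult_Lam)

lemma hs_sq_Y_eq_sum: "hs_sq Y = (\<Sum>i<n. e i * (lf i)\<^sup>2)"
  unfolding hs_sq_Y_eq e_def by (simp add: mtrace_mult_Lam)

lemma h_bounds: "i < n \<Longrightarrow> 0 \<le> h i \<and> h i \<le> 1 - G $$ (i,i)"
  using orth_proj_sandwich_diag_bounds[OF Gperp P] unfolding h_def by (simp add: Gperp_def)

lemma e_bounds: "i < n \<Longrightarrow> 0 \<le> e i \<and> e i \<le> G $$ (i,i)"
  using orth_proj_sandwich_diag_bounds[OF G Pperp] unfolding e_def by simp

lemma sum_h: "(\<Sum>i<n. h i) = t"
proof -
  have "(\<Sum>i<n. h i) = mtrace (Gperp * P * Gperp)"
    by (simp add: h_def mtrace_def)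
  also have "\<dots> = mtrace (P * Gperp)" by (rule mtrace_orth_proj_sandwich[OF Gperp]) simp
  also have "\<dots> = t"
    by (simp add: Gperp_def t_def sq_mat_simps mtrace_diff[of _ n] mtrace_P)
  finally show ?thesis .
qed

lemma sum_e: "(\<Sum>i<n. e i) = t"
proof -
  have "(\<Sum>i<n. e i) = mtrace (G * Pperp * G)"
    by (simp add: e_def mtrace_def)
  also have "\<dots> = mtrace (Pperp * G)" by (rule mtrace_orth_proj_sandwich[OF G]) simp
  also have "\<dots> = t"
    by (simp add: Pperp_def t_def sq_mat_simps mtrace_diff[of _ n] mtrace_G)
  finally show ?thesis .
qed

lemma t_nonneg: "0 \<le> t"
  using sum_h h_bounds by (metis lessThan_iff sum_nonneg)

lemma t_le_rM: "t \<le> rM"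
proof -
  have "t \<le> r"
    using sum_e G_diag_sum e_bounds sum_mono[of "{..<n}" e "\<lambda>i. G $$ (i,i)"] by simp
  moreover have "t \<le> real n - r"
    using sum_h G_diag_sum h_bounds sum_mono[of "{..<n}" h "\<lambda>i. 1 - G $$ (i,i)"]
    by (simp add: sum_subtractf)
  ultimately show ?thesis using r_le_n by (simp add: of_nat_diff)
qed

lemma mtrace_Gperp: "mtrace Gperp = real (n - r)"
  using r_le_n by (simp add: Gperp_def mtrace_diff[of _ n] mtrace_G of_nat_diff)

lemma mtrace_Pperp: "mtrace Pperp = real (n - r)"
  using r_le_n by (simp add: Pperp_def mtrace_diff[of _ n] mtrace_P of_nat_diff)

lemma sqrt_rM: "sqrt rM = min (sqrt r) (sqrt (n - r))"
  by (simp add: min_def)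

lemma abs_mtrace_X_le: "\<bar>mtrace (transpose_mat F * X)\<bar> \<le> s * sqrt rM * sqrt (hs_sq X)"
proof -
  have "P * X = X" by (simp add: X_def sq_mult_assoc orth_proj_idem_assoc[OF P])
  from abs_mtrace_le_left_proj[OF P X_carrier this F_transpose s_nonneg]
  have "\<bar>mtrace (transpose_mat F * X)\<bar> \<le> s * sqrt r * sqrt (hs_sq X)" by (simp add: mtrace_P)
  moreover have "X * Gperp = X"
    by (simp add: X_def sq_mult_assoc Gperp_Dlam_commute)
      (simp flip: sq_mult_assoc add: orth_proj_idem[OF Gperp])
  from abs_mtrace_le_right_proj[OF Gperp X_carrier this F s_nonneg]
  have "\<bar>mtrace (transpose_mat F * X)\<bar> \<le> s * sqrt (n - r) * sqrt (hs_sq X)" by (simp add: mtrace_Gperp)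
  ultimately show ?thesis by (simp add: sqrt_rM min_def)
qed

lemma abs_mtrace_Y_le: "\<bar>mtrace (transpose_mat F * Y)\<bar> \<le> s * sqrt rM * sqrt (hs_sq Y)"
proof -
  have "Y * G = Y"
    by (simp add: Y_def sq_mult_assoc G_Dlam_commute)
      (simp flip: sq_mult_assoc add: orth_proj_idem[OF G])
  from abs_mtrace_le_right_proj[OF G Y_carrier this F s_nonneg]
  have "\<bar>mtrace (transpose_mat F * Y)\<bar> \<le> s * sqrt r * sqrt (hs_sq Y)" by (simp add: mtrace_G)
  moreover have "Pperp * Y = Y" by (simp add: Y_def sq_mult_assoc orth_proj_idem_assoc[OF Pperp])
  from abs_mtrace_le_left_proj[OF Pperp Y_carrier this F_transpose s_nonneg]
  have "\<bar>mtrace (transpose_mat F * Y)\<bar> \<le> s * sqrt (n - r) * sqrt (hs_sq Y)" by (simp add: mtrace_Pperp)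
  ultimately show ?thesis by (simp add: sqrt_rM min_def)
qed

lemma hs_sq_X_le_threshold: "hs_sq X \<le> (lf (r - 1))\<^sup>2 * t"
  unfolding hs_sq_X_eq_sum sum_h[symmetric]
  by (rule sum_weighted_le_on_support) (use h_bounds G_diag_below in force)+

lemma threshold_le_hs_sq_Y: "(lf (r - 1))\<^sup>2 * t \<le> hs_sq Y"
  unfolding hs_sq_Y_eq_sum sum_e[symmetric]
  by (rule sum_weighted_ge_on_support) (use e_bounds G_diag_above in force)+

lemma hs_sq_Y_le_top: "hs_sq Y \<le> (lf 0)\<^sup>2 * t"
  unfolding hs_sq_Y_eq_sum sum_e[symmetric]
  by (rule sum_weighted_le_on_support) (use e_bounds lf_sq_antimono in auto)

lemma hs_sq_X_le_gap:
  assumes gap: "lf r < lf (r - 1)"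
  shows "hs_sq X \<le> (lf r)\<^sup>2 * t"
proof -
  have "(lf r)\<^sup>2 < (lf (r - 1))\<^sup>2" using gap lf_nonneg by (simp add: power_strict_mono)
  then have below_gap: "(lf i)\<^sup>2 < (lf (r - 1))\<^sup>2" if "r \<le> i" for i
    using lf_sq_antimono[OF that] by linarith
  have "G $$ (i,i) = 0" if "r \<le> i" "i < n" for i
    using G_diag_above[OF that(2)] below_gap[OF that(1)] G_diag_bounds[OF that(2)] by force
  then have "(\<Sum>i\<in>{r..<n}. G $$ (i,i)) = 0" by (intro sum.neutral) auto
  then have "(\<Sum>i<r. 1 - G $$ (i,i)) = 0"
    using sum_lessThan_split[OF r_le_n, of "\<lambda>i. G $$ (i,i)"] G_diag_sum by (simp add: sum_subtractf)
  then have "1 - G $$ (i,i) = 0" if "i < r" for i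
    using that G_diag_bounds r_le_n by (subst (asm) sum_nonneg_eq_0_iff) auto
  then have "h i = 0" if "i < r" for i
    using that h_bounds[of i] r_le_n by force
  then have "(lf i)\<^sup>2 \<le> (lf r)\<^sup>2" if "0 < h i" for i
    using that lf_sq_antimono[of r i] by (metis less_irrefl not_less)
  then show ?thesis
    unfolding hs_sq_X_eq_sum sum_h[symmetric]
    by (intro sum_weighted_le_on_support) (use h_bounds in auto)
qed

lemma hs_sq_X_le_next_block: "hs_sq X \<le> (\<Sum>i\<in>{r..<2*r}. (lf i)\<^sup>2)"
  unfolding hs_sq_X_eq_sum
  using weighted_sum_le_next_block[of r n "\<lambda>i. (lf i)\<^sup>2" "\<lambda>i. G $$ (i,i)" h] r_le_n
    lf_sq_antimono lf_vanish G_diag_bounds G_diag_sum h_bounds G_diag_below G_diag_above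
    sum_h t_le_rM
  by (simp add: mult.commute)

lemma Z_le_excess:
  "Z \<le> (sqrt (hs_sq X))\<^sup>2 - (sqrt (hs_sq Y))\<^sup>2 + 2 * s * sqrt rM * (sqrt (hs_sq X) + sqrt (hs_sq Y))"
  using Z_split abs_mtrace_X_le abs_mtrace_Y_le hs_sq_nonneg[OF X_carrier]
    hs_sq_nonneg[OF Y_carrier]
  by (simp add: algebra_simps abs_le_iff)

lemma sqrt_hs_sq_X_le_Y: "sqrt (hs_sq X) \<le> sqrt (hs_sq Y)"
  using hs_sq_X_le_threshold threshold_le_hs_sq_Y by simp

lemma sqrt_hs_sq_Y_le_top: "sqrt (hs_sq Y) \<le> lf 0 * sqrt t"
  using real_sqrt_le_mono[OF hs_sq_Y_le_top] lf_nonneg by (simp add: real_sqrt_mult)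

lemma Z_le_linear: "Z \<le> 4 * real rM * lf 0 * s"
proof -
  have "sqrt (hs_sq Y) \<le> lf 0 * sqrt rM"
    using sqrt_hs_sq_Y_le_top t_le_rM lf_nonneg by (meson mult_left_mono order.trans real_sqrt_le_mono)
  then have "(sqrt (hs_sq X))\<^sup>2 - (sqrt (hs_sq Y))\<^sup>2 + 2 * s * sqrt rM * (sqrt (hs_sq X) + sqrt (hs_sq Y))
      \<le> 2 * (2 * s * sqrt rM) * (lf 0 * sqrt rM)"
    by (intro excess_le_linear[OF _ sqrt_hs_sq_X_le_Y])
      (use s_nonneg hs_sq_nonneg[OF X_carrier] in auto)
  then show ?thesis using Z_le_excess by (simp add: algebra_simps)
qed

lemma Z_le_gap:
  assumes gap: "lf r < lf (r - 1)"
  shows "Z \<le> 4 * real rM * (lf 0)\<^sup>2 / ((lf (r - 1))\<^sup>2 - (lf r)\<^sup>2) * s\<^sup>2"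
proof -
  define \<gamma> where "\<gamma> = (lf (r - 1))\<^sup>2 - (lf r)\<^sup>2"
  have \<gamma>: "0 < \<gamma>" unfolding \<gamma>_def using gap lf_nonneg by (simp add: power_strict_mono)
  have "(sqrt (hs_sq X))\<^sup>2 - (sqrt (hs_sq Y))\<^sup>2 \<le> - \<gamma> * (sqrt t)\<^sup>2"
    using hs_sq_X_le_gap[OF gap] threshold_le_hs_sq_Y hs_sq_nonneg[OF X_carrier]
      hs_sq_nonneg[OF Y_carrier] t_nonneg
    by (simp add: \<gamma>_def algebra_simps)
  moreover have "2 * s * sqrt rM * (sqrt (hs_sq X) + sqrt (hs_sq Y)) \<le> 2 * s * sqrt rM * (2 * lf 0 * sqrt t)"
    using sqrt_hs_sq_X_le_Y sqrt_hs_sq_Y_le_top s_nonneg by (intro mult_left_mono) (linarith, simp)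
  ultimately have "Z \<le> - \<gamma> * (sqrt t)\<^sup>2 + 2 * (2 * s * sqrt rM * lf 0) * sqrt t"
    using Z_le_excess by (simp add: algebra_simps)
  also have "\<dots> \<le> (2 * s * sqrt rM * lf 0)\<^sup>2 / \<gamma>" by (rule concave_quadratic_le[OF \<gamma>])
  also have "\<dots> = 4 * real rM * (lf 0)\<^sup>2 / \<gamma> * s\<^sup>2" by (simp add: power_mult_distrib)
  finally show ?thesis unfolding \<gamma>_def .
qed

lemma Z_le_tail:
  "Z \<le> max (4 * sqrt (real rM * (\<Sum>i\<in>{r..<2*r}. (lf i)\<^sup>2)) * s) (4 * real rM * s\<^sup>2)"
proof -
  note Z_le_excess
  also have "(sqrt (hs_sq X))\<^sup>2 - (sqrt (hs_sq Y))\<^sup>2 + 2 * s * sqrt rM * (sqrt (hs_sq X) + sqrt (hs_sq Y))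
      \<le> max (2 * (2 * s * sqrt rM) * sqrt (\<Sum>i\<in>{r..<2*r}. (lf i)\<^sup>2)) ((2 * s * sqrt rM)\<^sup>2)"
    by (intro excess_le_max[OF _ sqrt_hs_sq_X_le_Y])
      (use s_nonneg hs_sq_X_le_next_block hs_sq_nonneg[OF X_carrier] in auto)
  also have "\<dots> = max (4 * sqrt (real rM * (\<Sum>i\<in>{r..<2*r}. (lf i)\<^sup>2)) * s) (4 * real rM * s\<^sup>2)"
    by (simp add: power_mult_distrib real_sqrt_mult mult_ac)
  finally show ?thesis .
qed

end

section \<open>Reduction to singular coordinates\<close>

context square_matrices
begin

lemma proj_set_orth_proj:
  "P \<in> proj_set n r \<Longrightarrow> orth_proj n P \<and> mtrace P = r"
  using orth_proj_rank_eq_trace[of P] unfolding proj_set_def orth_proj_def by auto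

lemma top_singular_proj:
  assumes U: "orth_mat n U" and r: "r \<le> n"
  defines "J \<equiv> mat_diag n (\<lambda>i. if i < r then 1 else 0 :: real)"
  shows "U * J * transpose_mat U \<in> proj_set n r"
    and "transpose_mat U * (U * J * transpose_mat U) * U = J"
proof -
  note [simp] = orth_mat_carrier[OF U]
  have J: "orth_proj n J" by (simp add: J_def orth_proj_def if_distrib cong: if_cong)
  have "mtrace J = (\<Sum>i<n. if i < r then 1 else 0 :: real)"
    by (simp add: J_def mtrace_def mat_diag_def)
  also have "\<dots> = r"
    using r by (simp add: sum.If_cases Int_absorb1 lessThan_subset_iff flip: lessThan_def)
  finally have trJ: "mtrace J = r" .
  have UtU: "transpose_mat U * U = 1\<^sub>m n" using U by (simp add: orth_mat_def)
  note conj = orth_proj_conj[OF J, of "transpose_mat U"]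
  have JU: "orth_proj n (U * J * transpose_mat U)" and "mtrace (U * J * transpose_mat U) = r"
    using conj UtU trJ by simp_all
  then show "U * J * transpose_mat U \<in> proj_set n r"
    using orth_proj_rank_eq_trace[OF JU] unfolding proj_set_def by (simp add: orth_proj_def)
  have "transpose_mat U * (U * J * transpose_mat U) * U = (transpose_mat U * U) * J * (transpose_mat U * U)"
    by (simp add: J_def sq_mult_assoc)
  then show "transpose_mat U * (U * J * transpose_mat U) * U = J"
    using UtU by (simp add: J_def sq_one_mult)
qed

end

lemma has_singular_values_carrier: "has_singular_values n C lam \<Longrightarrow> C \<in> carrier_mat n n"
  by (simp add: has_singular_values_def)

lemma has_singular_values_shifted:
  assumes sv: "has_singular_values n C lam" and vanish: "\<forall>i>n. lam i = 0"
  shows "0 \<le> lam (Suc i)" and "i \<le> j \<Longrightarrow> lam (Suc j) \<le> lam (Suc i)"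
    and "n \<le> i \<Longrightarrow> lam (Suc i) = 0"
proof -
  have nonneg: "\<forall>i\<in>{1..n}. 0 \<le> lam i"
    and antimono: "\<forall>i j. 1 \<le> i \<longrightarrow> i \<le> j \<longrightarrow> j \<le> n \<longrightarrow> lam j \<le> lam i"
    using sv by (simp_all add: has_singular_values_def)
  show "0 \<le> lam (Suc i)" using nonneg vanish by (cases "Suc i \<le> n") auto
  show "n \<le> i \<Longrightarrow> lam (Suc i) = 0" using vanish by simp
  show "lam (Suc j) \<le> lam (Suc i)" if "i \<le> j"
  proof (cases "Suc j \<le> n")
    case True
    then show ?thesis using antimono that by simp
  next
    case False
    then show ?thesis using vanish nonneg by (cases "Suc i \<le> n") auto
  qed
qed

lemma has_singular_values_le_first:
  "has_singular_values n E mu \<Longrightarrow> \<forall>i<n. \<bar>mu (Suc i)\<bar> \<le> mu 1"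
  by (simp add: has_singular_values_def)

context square_matrices
begin

lemma maximizer_dominates_top_block:
  assumes r: "r \<le> n" and U: "orth_mat n U" and V: "orth_mat n V"
    and C: "C = U * mat_diag n f * transpose_mat V"
    and pi: "orth_proj n \<pi>" and pi_max: "\<forall>P\<in>proj_set n r. hs_norm (P * C) \<le> hs_norm (\<pi> * C)"
  shows "(\<Sum>i<r. (f i)\<^sup>2) \<le> (\<Sum>i<n. (transpose_mat U * \<pi> * U) $$ (i,i) * (f i)\<^sup>2)"
proof -
  define J where "J = mat_diag n (\<lambda>i. if i < r then 1 else 0 :: real)"
  note top = top_singular_proj[OF U r, folded J_def]
  have "(hs_norm (U * J * transpose_mat U * C))\<^sup>2 = (\<Sum>i<n. J $$ (i,i) * (f i)\<^sup>2)"
    using hs_norm_orth_proj_mult_svd[OF _ U V C] proj_set_orth_proj[OF top(1)] top(2) by simp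
  also have "\<dots> = (\<Sum>i<n. if i < r then (f i)\<^sup>2 else 0)"
    by (intro sum.cong) (simp_all add: J_def mat_diag_def)
  also have "\<dots> = (\<Sum>i<r. (f i)\<^sup>2)"
  proof -
    have "{..<n} \<inter> {i. i < r} = {..<r}" using r by auto
    then show ?thesis by (simp add: sum.If_cases)
  qed
  finally have "(\<Sum>i<r. (f i)\<^sup>2) = (hs_norm (U * J * transpose_mat U * C))\<^sup>2" ..
  also have "\<dots> \<le> (hs_norm (\<pi> * C))\<^sup>2"
    using pi_max top(1) by (intro power_mono) (auto simp: hs_norm_def sum_nonneg)
  also have "\<dots> = (\<Sum>i<n. (transpose_mat U * \<pi> * U) $$ (i,i) * (f i)\<^sup>2)"
    by (rule hs_norm_orth_proj_mult_svd[OF pi U V C])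
  finally show ?thesis .
qed

end

lemma excess_bounds:
  fixes M r :: nat and C E \<pi> P :: "real mat" and lam mu :: "nat \<Rightarrow> real"
  assumes r_pos: "1 \<le> r" and r_le: "r \<le> M"
    and C_sv: "has_singular_values M C lam" and lam_zero: "\<forall>i>M. lam i = 0"
    and E_sv: "has_singular_values M E mu"
    and pi_in: "\<pi> \<in> proj_set M r"
    and pi_max: "\<forall>P\<in>proj_set M r. hs_norm (P * C) \<le> hs_norm (\<pi> * C)"
    and P_in: "P \<in> proj_set M r"
  defines "Z \<equiv> (hs_norm (P * C))\<^sup>2 - (hs_norm (\<pi> * C))\<^sup>2 + 2 * mtrace (transpose_mat E * (P - \<pi>) * C)"
    and "rM \<equiv> min r (M - r)"
  shows "Z \<le> 4 * real rM * lam 1 * mu 1"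
    and "lam (r + 1) < lam r \<Longrightarrow>
      Z \<le> 4 * real rM * (lam 1)\<^sup>2 / ((lam r)\<^sup>2 - (lam (r + 1))\<^sup>2) * (mu 1)\<^sup>2"
    and "Z \<le> max (4 * sqrt (real rM * (\<Sum>i\<in>{r+1..2*r}. (lam i)\<^sup>2)) * mu 1) (4 * real rM * (mu 1)\<^sup>2)"
proof -
  interpret square_matrices M .
  define lf where "lf i = lam (Suc i)" for i
  obtain U V where U: "orth_mat M U" and V: "orth_mat M V"
    and C: "C = U * mat_diag M lf * transpose_mat V"
    using C_sv unfolding has_singular_values_def lf_def by auto
  obtain U2 V2 where U2: "orth_mat M U2" and V2: "orth_mat M V2"
    and E: "E = U2 * mat_diag M (\<lambda>i. mu (Suc i)) * transpose_mat V2"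
    using E_sv unfolding has_singular_values_def by auto
  note pi = proj_set_orth_proj[OF pi_in] and P = proj_set_orth_proj[OF P_in]
  let ?G = "transpose_mat U * \<pi> * U" and ?Q = "transpose_mat U * P * U"
    and ?F = "transpose_mat U * E * V"
  have UUt: "U * transpose_mat U = 1\<^sub>m M" by (rule orth_mat_mult_transpose[OF U])
  note conj = orth_proj_conj[OF _ orth_mat_carrier[OF U] UUt]
  note lf = has_singular_values_shifted[OF C_sv lam_zero, folded lf_def]
  have mu_1: "0 \<le> mu 1" using E_sv r_pos r_le by (auto simp: has_singular_values_def)
  note F = op_norm_le_rotated[OF U V U2 V2 E has_singular_values_le_first[OF E_sv]]
  interpret pc: proj_comparison M r ?G ?Q ?F lf "mu 1"
    by unfold_locales (use r_pos r_le conj pi P lf mu_1 F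
        maximizer_dominates_top_block[OF r_le U V C pi[THEN conjunct1] pi_max] in auto)
  have "Z = pc.Z"
    unfolding Z_def pc.Z_def pc.Dlam_def
      hs_norm_orth_proj_mult_svd[OF P[THEN conjunct1] U V C]
      hs_norm_orth_proj_mult_svd[OF pi[THEN conjunct1] U V C]
      mtrace_perturbation_rotate[OF U V C orth_proj_carrier[OF P[THEN conjunct1]]
        orth_proj_carrier[OF pi[THEN conjunct1]] has_singular_values_carrier[OF E_sv]]
    by (simp add: sum_subtractf left_diff_distrib)
  moreover have "lf 0 = lam 1" "lf (r - 1) = lam r" "lf r = lam (r + 1)"
    using r_pos by (simp_all add: lf_def)
  moreover have "(\<Sum>i\<in>{r..<2*r}. (lf i)\<^sup>2) = (\<Sum>i\<in>{r+1..2*r}. (lam i)\<^sup>2)"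
    unfolding lf_def by (subst sum.shift_bounds_Suc_ivl[symmetric]) (simp add: atLeastLessThanSuc_atLeastAtMost)
  ultimately show "Z \<le> 4 * real rM * lam 1 * mu 1"
    and "lam (r + 1) < lam r \<Longrightarrow>
      Z \<le> 4 * real rM * (lam 1)\<^sup>2 / ((lam r)\<^sup>2 - (lam (r + 1))\<^sup>2) * (mu 1)\<^sup>2"
    and "Z \<le> max (4 * sqrt (real rM * (\<Sum>i\<in>{r+1..2*r}. (lam i)\<^sup>2)) * mu 1) (4 * real rM * (mu 1)\<^sup>2)"
    using pc.Z_le_linear pc.Z_le_gap pc.Z_le_tail unfolding rM_def by simp_all
qed

theorem proposition1:
  fixes M r :: nat and C E pi :: "real mat" and lam mu :: "nat \<Rightarrow> real"
    and sigma1 :: real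
  assumes r_pos: "1 \<le> r" and r_le: "r \<le> M"
    and C_sv: "has_singular_values M C lam"
    and lam_zero: "\<forall>i>M. lam i = 0"
    and E_sv: "has_singular_values M E mu"
    and sigma1_def: "sigma1 = mu 1"
    and pi_in: "pi \<in> proj_set M r"
    and pi_max: "\<forall>P\<in>proj_set M r. hs_norm (P * C) \<le> hs_norm (pi * C)"
  shows
    "(let rM = min r (M - r);
          Delta = (\<Sum>i\<in>{r+1..2*r}. (lam i)\<^sup>2);
          Z = (\<lambda>P. (hs_norm (P * C))\<^sup>2 - (hs_norm (pi * C))\<^sup>2
                    + 2 * mtrace (transpose_mat E * (P - pi) * C));
          I' = ereal (4 * real rM * lam 1 * sigma1);
          II' = (if lam r > lam (r+1)
                 then ereal (4 * real rM * (lam 1)\<^sup>2 / ((lam r)\<^sup>2 - (lam (r+1))\<^sup>2) * sigma1\<^sup>2)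
                 else \<infinity>);
          III' = (if lam r > 0
                  then ereal (max (4 * sqrt (real rM * Delta) * (lam 1 / lam r) * sigma1)
                                  (8 * real rM * (lam 1)\<^sup>2 / (lam r)\<^sup>2 * sigma1\<^sup>2))
                  else \<infinity>)
      in (SUP P\<in>proj_set M r. ereal (Z P)) \<le> min I' (min II' III'))"
proof -
  define rM where "rM = min r (M - r)"
  define Delta where "Delta = (\<Sum>i\<in>{r+1..2*r}. (lam i)\<^sup>2)"
  define Z where "Z = (\<lambda>P. (hs_norm (P * C))\<^sup>2 - (hs_norm (pi * C))\<^sup>2
    + 2 * mtrace (transpose_mat E * (P - pi) * C))"
  have "0 \<le> sigma1" and "lam r \<le> lam 1" and "0 \<le> Delta"
    using E_sv C_sv r_pos r_le unfolding sigma1_def Delta_def has_singular_values_def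
    by (auto intro: sum_nonneg)
  then have tail_mono: "0 < lam r \<Longrightarrow> max (4 * sqrt (real rM * Delta) * sigma1) (4 * real rM * sigma1\<^sup>2)
      \<le> max (4 * sqrt (real rM * Delta) * (lam 1 / lam r) * sigma1)
        (8 * real rM * (lam 1)\<^sup>2 / (lam r)\<^sup>2 * sigma1\<^sup>2)"
    by (intro max_tail_bound_mono) auto
  have bounds: "Z P \<le> 4 * real rM * lam 1 * sigma1
    \<and> (lam (r + 1) < lam r \<longrightarrow>
        Z P \<le> 4 * real rM * (lam 1)\<^sup>2 / ((lam r)\<^sup>2 - (lam (r + 1))\<^sup>2) * sigma1\<^sup>2)
    \<and> (0 < lam r \<longrightarrow> Z P \<le> max (4 * sqrt (real rM * Delta) * (lam 1 / lam r) * sigma1)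
        (8 * real rM * (lam 1)\<^sup>2 / (lam r)\<^sup>2 * sigma1\<^sup>2))"
    if "P \<in> proj_set M r" for P
    using excess_bounds[OF r_pos r_le C_sv lam_zero E_sv pi_in pi_max that, folded sigma1_def]
      tail_mono unfolding Z_def rM_def Delta_def by (auto intro: order.trans)
  show ?thesis
    unfolding Let_def rM_def[symmetric] Delta_def[symmetric] Z_def[symmetric]
    by (rule SUP_least) (use bounds in \<open>simp add: min.bounded_iff del: ereal_max\<close>)
qed

end
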